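(* Let $\mathbb{E}$ be a finite-dimensional Euclidean space, $\mathcal{K}\subseteq\mathbb{E}$ a closed convex cone, $\mathcal{A}:\mathbb{E}\to\mathbb{R}^m$ a surjective linear map and $b\in\mathbb{R}^m$, and let $\mathcal{F}=\{x\in\mathcal{K}:\mathcal{A}x=b\}\neq\emptyset$. Suppose strict feasibility fails for $\mathcal{F}$. Let $\{y^i\}_{i=1}^k$ be the vectors obtained by a facial reduction process applied to $\mathcal{F}$, let $\bar{\mathcal{K}}=\mathcal{K}\cap\bigcap_{i=1}^k(\mathcal{A}^*y^i)^\perp$ and $\bar{\mathbb{E}}=\operatorname{span}(\bar{\mathcal{K}})$. Then the restriction $\bar{\mathcal{A}}:\bar{\mathbb{E}}\to\mathbb{R}^m$ of $\mathcal{A}$ to $\bar{\mathbb{E}}$ is not surjective. In other words, the equality constraint system in $\{x\in\bar{\mathcal{K}}:\mathcal{A}x=b\}$ contains redundant constraints.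
   Context: Strict feasibility of $\{x\in C:\mathcal{A}x=b\}$ with respect to a closed convex cone $C$ means that this set contains a point of $\operatorname{relint}(C)$. For a cone $C$, $C^*=\{z:\langle z,x\rangle\ge0\ \forall x\in C\}$ is the dual cone and $C^\perp$ its orthogonal complement; $v^\perp=\{v\}^\perp$. Facial reduction process: set $\mathcal{K}^0=\mathcal{K}$, $\mathcal{F}^0=\mathcal{F}$, $k=0$; while strict feasibility fails for $\mathcal{F}^k=\{x\in\mathcal{K}^k:\mathcal{A}x=b\}$ with respect to $\mathcal{K}^k$, increase $k$ by one, choose $y^k\in\mathbb{R}^m$ with $\mathcal{A}^*y^k\in(\mathcal{K}^{k-1})^*\setminus(\mathcal{K}^{k-1})^\perp$ and $\langle b,y^k\rangle=0$, and set $\mathcal{K}^k=\mathcal{K}^{k-1}\cap(\mathcal{A}^*y^k)^\perp$. (Such $y^k$ exists whenever strict feasibility fails.) The process returns the vectors $y^1,\dots,y^k$ at termination. *)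

theory Defs
  imports "HOL-Analysis.Analysis"
begin

definition dual_cone :: "'a::real_inner set \<Rightarrow> 'a set" where
  "dual_cone C = {z. \<forall>x\<in>C. z \<bullet> x \<ge> 0}"

definition strictly_feasible :: "'a::euclidean_space set \<Rightarrow> ('a \<Rightarrow> 'b) \<Rightarrow> 'b \<Rightarrow> bool" where
  "strictly_feasible C A b \<longleftrightarrow> (\<exists>x \<in> rel_interior C. A x = b)"

text \<open>The cones K^i of the facial reduction process, the vectors y^1, y^2, ... being ys 1, ys 2, ...\<close>
fun fr_cone :: "'a::euclidean_space set \<Rightarrow> ('a \<Rightarrow> 'b::real_inner) \<Rightarrow> (nat \<Rightarrow> 'b) \<Rightarrow> nat \<Rightarrow> 'a set" where
  "fr_cone K A ys 0 = K"
| "fr_cone K A ys (Suc i) = fr_cone K A ys i \<inter> orthogonal_comp {adjoint A (ys (Suc i))}"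

text \<open>ys 1, ..., ys k are vectors returned by (a run of) the facial reduction process
  applied to {x in K. A x = b}: at each step strict feasibility fails, y^i is a valid
  choice, and the process terminates at step k.\<close>
definition facial_reduction_process ::
  "'a::euclidean_space set \<Rightarrow> ('a \<Rightarrow> 'b::real_inner) \<Rightarrow> 'b \<Rightarrow> (nat \<Rightarrow> 'b) \<Rightarrow> nat \<Rightarrow> bool" where
  "facial_reduction_process K A b ys k \<longleftrightarrow>
     (\<forall>i<k. \<not> strictly_feasible (fr_cone K A ys i) A b
        \<and> adjoint A (ys (Suc i)) \<in> dual_cone (fr_cone K A ys i) - orthogonal_comp (fr_cone K A ys i)
        \<and> b \<bullet> ys (Suc i) = 0)
     \<and> strictly_feasible (fr_cone K A ys k) A b"

end

theory Submission
  imports Defs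
begin

(* Since K itself is not strictly feasible, the process performs at least one step, and its
   first vector y1 has A* y1 nonzero. The reduced cone lies in the hyperplane (A* y1)^perp, hence
   so does its span, so A maps that span into the hyperplane y1^perp of R^m. *)

lemma orthogonal_comp_singleton_neq_UNIV:
  fixes y :: "'a::real_inner"
  assumes "y \<noteq> 0"
  shows "{y}\<^sup>\<bottom> \<noteq> UNIV"
proof
  assume "{y}\<^sup>\<bottom> = UNIV"
  then have "y \<in> {y}\<^sup>\<bottom>"
    by simp
  then have "y \<bullet> y = 0"
    by (simp add: orthogonal_comp_def orthogonal_def)
  with assms show False
    by simp
qed

lemma linear_image_span_subset_orthogonal_comp:
  fixes A :: "'a::euclidean_space \<Rightarrow> 'b::euclidean_space"
  assumes "linear A" and "S \<subseteq> {adjoint A y}\<^sup>\<bottom>"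
  shows "A ` span S \<subseteq> {y}\<^sup>\<bottom>"
proof -
  have "span S \<subseteq> {adjoint A y}\<^sup>\<bottom>"
    using assms(2) subspace_orthogonal_comp by (rule span_minimal)
  then show ?thesis
    by (auto simp: orthogonal_comp_def orthogonal_def adjoint_clauses[OF assms(1)] inner_commute)
qed

lemma facial_reduction_process_first_step:
  assumes "facial_reduction_process K A b ys k" and "\<not> strictly_feasible K A b"
  shows "0 < k" and "adjoint A (ys 1) \<noteq> 0"
proof -
  show "0 < k"
    using assms by (cases k) (simp_all add: facial_reduction_process_def)
  then have "adjoint A (ys 1) \<notin> K\<^sup>\<bottom>"
    using assms(1) by (auto simp: facial_reduction_process_def)
  then show "adjoint A (ys 1) \<noteq> 0"
    by (auto simp: orthogonal_comp_def orthogonal_def)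
qed

theorem theorem3p5:
  fixes K :: "'a::euclidean_space set"
    and A :: "'a \<Rightarrow> real ^ 'm"
    and b :: "real ^ 'm"
    and ys :: "nat \<Rightarrow> real ^ 'm"
    and k :: nat
  assumes "closed K" and "convex K" and "cone K"
    and "linear A" and "surj A"
    and "{x \<in> K. A x = b} \<noteq> {}"
    and "\<not> strictly_feasible K A b"
    and "facial_reduction_process K A b ys k"
  shows "A ` span (K \<inter> (\<Inter>i\<in>{1..k}. orthogonal_comp {adjoint A (ys i)})) \<noteq> UNIV"
proof -
  have "0 < k" and adjoint_nonzero: "adjoint A (ys 1) \<noteq> 0"
    using facial_reduction_process_first_step[OF assms(8,7)] by blast+
  then have "K \<inter> (\<Inter>i\<in>{1..k}. {adjoint A (ys i)}\<^sup>\<bottom>) \<subseteq> {adjoint A (ys 1)}\<^sup>\<bottom>"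
    by auto
  then have "A ` span (K \<inter> (\<Inter>i\<in>{1..k}. {adjoint A (ys i)}\<^sup>\<bottom>)) \<subseteq> {ys 1}\<^sup>\<bottom>"
    using assms(4) by (rule linear_image_span_subset_orthogonal_comp[rotated])
  moreover have "ys 1 \<noteq> 0"
    using adjoint_nonzero linear_0[OF adjoint_linear[OF assms(4)]] by auto
  ultimately show ?thesis
    using orthogonal_comp_singleton_neq_UNIV by blast
qed

end
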